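(* Let $n\ge 2$ and let $g\ge0$ be an integer with $\gcd(n,g)=1$. Let $(H_{k,m})_{m\ge0}$ be a generalized $k$-Horadam sequence with $H_{k,1}\ne0$, and put $M=g(k)(H_{k,n}-H_{k,0})$, $N=H_{k,1}-H_{k,n+1}$, and assume $M\neq 0$. Then $$\det C_{n,g}(H)=\det Q_g\cdot\left[H_{k,1}N^{n-1}+H_{k,1}M^{n-2}\sum_{i=1}^{n-1}\left(-\frac{H_{k,2}H_{k,i+1}}{H_{k,1}}+H_{k,i+2}\right)\left(\frac{N}{M}\right)^{i-1}\right].$$
   Context: Generalized $k$-Horadam sequence: $k>0$ is a real number, $f(k),g(k)$ are real numbers (values of fixed polynomials in $k$) with $f(k)^2+4g(k)>0$, and $a,b\in\mathbb{R}$; the sequence is defined by $H_{k,0}=a$, $H_{k,1}=b$, $H_{k,m+2}=f(k)H_{k,m+1}+g(k)H_{k,m}$ for $m\ge 0$. The real number $g(k)$ is unrelated to the integer shift parameter $g$. For $n\ge1$, an integer $g\ge 0$ and numbers $a_0,\dots,a_{n-1}$, the $g$-circulant matrix $g\text{-}circ(a_0,\dots,a_{n-1})$ is the $n\times n$ matrix whose $(i,j)$ entry ($0\le i,j\le n-1$) is $a_{(j-ig)\bmod n}$. $C_{n,g}(H):=g\text{-}circ(H_{k,1},\dots,H_{k,n})$. $Q_g:=g\text{-}circ(1,0,\dots,0)$, i.e. the $n\times n$ matrix whose $(i,j)$ entry is $1$ if $j\equiv ig \pmod n$ and $0$ otherwise. *)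

theory Defs
  imports "Jordan_Normal_Form.Determinant" "HOL-Computational_Algebra.Polynomial"
begin

text \<open>Generalized k-Horadam sequence with recurrence coefficients p = f(k), q = g(k),
  initial values a, b.\<close>
fun horadam :: "real \<Rightarrow> real \<Rightarrow> real \<Rightarrow> real \<Rightarrow> nat \<Rightarrow> real" where
  "horadam p q a b 0 = a"
| "horadam p q a b (Suc 0) = b"
| "horadam p q a b (Suc (Suc m)) = p * horadam p q a b (Suc m) + q * horadam p q a b m"

definition gcirc :: "nat \<Rightarrow> nat \<Rightarrow> (nat \<Rightarrow> 'a) \<Rightarrow> 'a mat" where
  "gcirc n g a = mat n n (\<lambda>(i, j). a (nat ((int j - int i * int g) mod int n)))"

definition Qg :: "nat \<Rightarrow> nat \<Rightarrow> 'a::{zero,one} mat" where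
  "Qg n g = gcirc n g (\<lambda>l. if l = 0 then 1 else 0)"

end

theory Submission
  imports Defs
begin

text \<open>Since \<open>Q_g\<close> selects row \<open>i g mod n\<close>, we have \<open>C(n,g) = Q_g C(n,1)\<close>, so it suffices
  to evaluate the ordinary circulant \<open>C = C(n,1)\<close>. Subtracting \<open>f(k)\<close> times column \<open>j - 1\<close> and
  \<open>g(k)\<close> times column \<open>j - 2\<close> from every column \<open>j \<ge> 2\<close> annihilates each entry by the
  recurrence, except where the cyclic indexing wraps around: there \<open>N\<close> remains on the diagonal
  and \<open>-M\<close> just above it. Expanding along the first row, and the two resulting minors recursively
  along their last rows, gives the division-free identity
  \<open>det C = H\<^sub>1 N^(n-1) + \<Sum>i=1..n-1. (H\<^sub>1 H(i+2) - H\<^sub>2 H(i+1)) M^(n-1-i) N^(i-1)\<close>.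
  The hypotheses \<open>H\<^sub>1 \<noteq> 0\<close> and \<open>M \<noteq> 0\<close> only serve to rewrite this in the stated form.\<close>

lemma index_mult_mat_sum:
  assumes "A \<in> carrier_mat n m" "B \<in> carrier_mat m l" "i < n" "j < l"
  shows "(A * B) $$ (i, j) = (\<Sum>k<m. A $$ (i, k) * B $$ (k, j))"
  using assms by (auto simp: scalar_prod_def lessThan_atLeast0 intro!: sum.cong)

lemma det_lower_triangular_const_diag:
  assumes "A \<in> carrier_mat n n" "\<And>i j. i < j \<Longrightarrow> j < n \<Longrightarrow> A $$ (i, j) = 0"
    "\<And>i. i < n \<Longrightarrow> A $$ (i, i) = d"
  shows "det A = d ^ n"
proof -
  have "diag_mat A = replicate n d"
    using assms by (auto simp: diag_mat_def map_replicate_const intro: nth_equalityI)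
  then show ?thesis
    using det_lower_triangular[OF assms(2,1)] by simp
qed

lemma det_upper_triangular_const_diag:
  assumes "A \<in> carrier_mat n n" "\<And>i j. j < i \<Longrightarrow> i < n \<Longrightarrow> A $$ (i, j) = 0"
    "\<And>i. i < n \<Longrightarrow> A $$ (i, i) = d"
  shows "det A = d ^ n"
proof -
  have "det A = det A\<^sup>T"
    using det_transpose[OF assms(1)] by simp
  also have "\<dots> = d ^ n"
    by (rule det_lower_triangular_const_diag) (use assms in auto)
  finally show ?thesis .
qed

definition bidiag_first_col_mat :: "nat \<Rightarrow> (nat \<Rightarrow> 'a) \<Rightarrow> 'a \<Rightarrow> 'a \<Rightarrow> 'a::zero mat" where
  "bidiag_first_col_mat m v d u = mat m m (\<lambda>(i, j).
     if j = 0 then v i else if i = j then d else if i + 1 = j then u else 0)"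

lemma det_bidiag_first_col_mat:
  "det (bidiag_first_col_mat (Suc m) v d u :: 'a::comm_ring_1 mat) =
     (\<Sum>s\<le>m. v s * (- u) ^ s * d ^ (m - s))"
proof (induction m)
  case 0
  then show ?case by (simp add: bidiag_first_col_mat_def det_def)
next
  case (Suc m)
  define A where "A = (bidiag_first_col_mat (Suc (Suc m)) v d u :: 'a mat)"
  have A: "A \<in> carrier_mat (Suc (Suc m)) (Suc (Suc m))"
    by (simp add: A_def bidiag_first_col_mat_def)
  have last_minor: "mat_delete A (Suc m) (Suc m) = bidiag_first_col_mat (Suc m) v d u"
    by (rule eq_matI) (auto simp: A_def bidiag_first_col_mat_def mat_delete_def)
  have first_minor: "det (mat_delete A (Suc m) 0) = u ^ Suc m"
    by (rule det_lower_triangular_const_diag)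
      (auto simp: A_def bidiag_first_col_mat_def mat_delete_def)
  have "det A = (\<Sum>j<Suc (Suc m). A $$ (Suc m, j) * cofactor A (Suc m) j)"
    by (rule laplace_expansion_row[OF A]) simp
  also have "\<dots> = (\<Sum>j<Suc (Suc m). (if j = 0 then v (Suc m) * cofactor A (Suc m) 0 else 0)
      + (if j = Suc m then d * cofactor A (Suc m) (Suc m) else 0))"
    by (rule sum.cong) (auto simp: A_def bidiag_first_col_mat_def)
  also have "\<dots> = v (Suc m) * cofactor A (Suc m) 0 + d * cofactor A (Suc m) (Suc m)"
    by (simp add: sum.distrib)
  also have "\<dots> = v (Suc m) * (- u) ^ Suc m + d * (\<Sum>s\<le>m. v s * (- u) ^ s * d ^ (m - s))"
    by (simp add: cofactor_def last_minor first_minor Suc.IH power_minus' flip: power_add mult_2)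
  also have "\<dots> = (\<Sum>s\<le>Suc m. v s * (- u) ^ s * d ^ (Suc m - s))"
    by (auto simp: sum_distrib_left Suc_diff_le algebra_simps intro!: sum.cong)
  finally show ?case by (simp add: A_def)
qed

definition bidiag_two_col_mat ::
  "nat \<Rightarrow> (nat \<Rightarrow> 'a) \<Rightarrow> (nat \<Rightarrow> 'a) \<Rightarrow> 'a \<Rightarrow> 'a \<Rightarrow> 'a::zero mat" where
  "bidiag_two_col_mat n c0 c1 d u = mat n n (\<lambda>(i, j).
     if j = 0 then c0 i else if j = 1 then c1 i
     else if i = j then d else if i + 1 = j then u else 0)"

lemma det_bidiag_two_col_mat:
  "det (bidiag_two_col_mat (Suc (Suc m)) c0 c1 d u :: 'a::comm_ring_1 mat) =
     (\<Sum>s\<le>m. (c0 0 * c1 (Suc s) - c1 0 * c0 (Suc s)) * (- u) ^ s * d ^ (m - s))"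
proof -
  define A where "A = (bidiag_two_col_mat (Suc (Suc m)) c0 c1 d u :: 'a mat)"
  have A: "A \<in> carrier_mat (Suc (Suc m)) (Suc (Suc m))"
    by (simp add: A_def bidiag_two_col_mat_def)
  have minor0: "mat_delete A 0 0 = bidiag_first_col_mat (Suc m) (\<lambda>i. c1 (Suc i)) d u"
    by (rule eq_matI) (auto simp: A_def bidiag_two_col_mat_def bidiag_first_col_mat_def mat_delete_def)
  have minor1: "mat_delete A 0 1 = bidiag_first_col_mat (Suc m) (\<lambda>i. c0 (Suc i)) d u"
    by (rule eq_matI) (auto simp: A_def bidiag_two_col_mat_def bidiag_first_col_mat_def mat_delete_def)
  have "det A = (\<Sum>j<Suc (Suc m). A $$ (0, j) * cofactor A 0 j)"
    by (rule laplace_expansion_row[OF A]) simp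
  also have "\<dots> = (\<Sum>j<Suc (Suc m). (if j = 0 then c0 0 * cofactor A 0 0 else 0)
      + (if j = 1 then c1 0 * cofactor A 0 1 else 0))"
    by (rule sum.cong) (auto simp: A_def bidiag_two_col_mat_def)
  also have "\<dots> = c0 0 * det (mat_delete A 0 0) - c1 0 * det (mat_delete A 0 1)"
    by (simp add: sum.distrib cofactor_def)
  also have "\<dots> = (\<Sum>s\<le>m. (c0 0 * c1 (Suc s) - c1 0 * c0 (Suc s)) * (- u) ^ s * d ^ (m - s))"
    unfolding minor0 minor1 det_bidiag_first_col_mat
    by (simp add: sum_distrib_left algebra_simps flip: sum_subtractf)
  finally show ?thesis by (simp add: A_def)
qed

definition recurrence_elim_mat :: "nat \<Rightarrow> 'a \<Rightarrow> 'a \<Rightarrow> 'a::comm_ring_1 mat" where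
  "recurrence_elim_mat n p q = mat n n (\<lambda>(l, j).
     if l = j then 1 else if 2 \<le> j \<and> l + 1 = j then - p
     else if 2 \<le> j \<and> l + 2 = j then - q else 0)"

lemma recurrence_elim_mat_carrier: "recurrence_elim_mat n p q \<in> carrier_mat n n"
  by (simp add: recurrence_elim_mat_def)

lemma det_recurrence_elim_mat: "det (recurrence_elim_mat n p q) = 1"
  by (rule det_upper_triangular_const_diag[where d = 1, simplified])
    (auto simp: recurrence_elim_mat_def)

lemma mult_recurrence_elim_mat_index:
  assumes A: "A \<in> carrier_mat n n" and ij: "i < n" "j < n"
  shows "(A * recurrence_elim_mat n p q) $$ (i, j) =
    (if j < 2 then A $$ (i, j) else A $$ (i, j) - p * A $$ (i, j - 1) - q * A $$ (i, j - 2))"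
proof -
  have "(A * recurrence_elim_mat n p q) $$ (i, j) =
      (\<Sum>l<n. A $$ (i, l) * recurrence_elim_mat n p q $$ (l, j))"
    by (rule index_mult_mat_sum[OF A recurrence_elim_mat_carrier ij])
  also have "\<dots> = (\<Sum>l<n. (if l = j then A $$ (i, l) else 0)
      + (if 2 \<le> j \<and> l = j - 1 then - p * A $$ (i, l) else 0)
      + (if 2 \<le> j \<and> l = j - 2 then - q * A $$ (i, l) else 0))"
    by (rule sum.cong) (use ij in \<open>auto simp: recurrence_elim_mat_def\<close>)
  also have "\<dots> = (if j < 2 then A $$ (i, j) else A $$ (i, j) - p * A $$ (i, j - 1) - q * A $$ (i, j - 2))"
    using ij by (simp add: sum.distrib) arith
  finally show ?thesis .
qed

lemma gcirc_one_index:
  assumes "i < n" "j < n"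
  shows "gcirc n 1 a $$ (i, j) = a ((j + n - i) mod n)"
proof -
  have "int (j + n - i) = int j - int i + int n"
    using assms by simp
  then have "(int j - int i) mod int n = int ((j + n - i) mod n)"
    by (simp add: of_nat_mod)
  then show ?thesis
    using assms by (simp add: gcirc_def)
qed

lemma Qg_index:
  assumes "i < n" "l < n"
  shows "(Qg n g :: 'a::{zero,one} mat) $$ (i, l) = (if l = i * g mod n then 1 else 0)"
proof -
  have "nat ((int l - int i * int g) mod int n) = 0 \<longleftrightarrow> (int l - int i * int g) mod int n = 0"
    using assms by (simp add: nat_eq_iff)
  also have "\<dots> \<longleftrightarrow> int l mod int n = int (i * g) mod int n"
    by (simp add: mod_eq_dvd_iff dvd_eq_mod_eq_0[symmetric])
  also have "\<dots> \<longleftrightarrow> l = i * g mod n"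
    using assms by (simp flip: of_nat_mod of_nat_mult)
  finally show ?thesis
    using assms by (simp add: Qg_def gcirc_def)
qed

lemma gcirc_eq_Qg_mult_gcirc_one:
  assumes "n > 0"
  shows "gcirc n g a = (Qg n g :: 'a::comm_ring_1 mat) * gcirc n 1 a"
proof (rule eq_matI)
  fix i j
  assume "i < dim_row (Qg n g * gcirc n 1 a)" "j < dim_col (Qg n g * gcirc n 1 a)"
  then have ij: "i < n" "j < n"
    by (simp_all add: Qg_def gcirc_def)
  define r where "r = i * g mod n"
  have r: "r < n"
    using assms by (simp add: r_def)
  have "(Qg n g * gcirc n 1 a) $$ (i, j) = (\<Sum>l<n. (Qg n g :: 'a mat) $$ (i, l) * gcirc n 1 a $$ (l, j))"
    by (rule index_mult_mat_sum[OF _ _ ij]) (simp_all add: Qg_def gcirc_def)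
  also have "\<dots> = (\<Sum>l<n. if l = r then gcirc n 1 a $$ (l, j) else 0)"
    by (rule sum.cong) (simp_all add: Qg_index ij r_def)
  also have "\<dots> = gcirc n 1 a $$ (r, j)"
    using r by simp
  also have "\<dots> = gcirc n g a $$ (i, j)"
  proof -
    have "(int j - int r) mod int n = (int j - int i * int g) mod int n"
      by (simp add: r_def of_nat_mod mod_diff_right_eq)
    then show ?thesis
      using r ij by (simp add: gcirc_def)
  qed
  finally show "gcirc n g a $$ (i, j) = (Qg n g * gcirc n 1 a) $$ (i, j)" ..
qed (simp_all add: Qg_def gcirc_def)

lemma cyclic_diff_mod:
  assumes "i < n" "j < (n::nat)"
  shows "(j + n - i) mod n = (if i \<le> j then j - i else j + n - i)"
proof (cases "i \<le> j")
  case True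
  then have "(j + n - i) mod n = (j - i) mod n"
    by (metis Nat.add_diff_assoc2 mod_add_self2)
  then show ?thesis using True assms by simp
next
  case False
  then show ?thesis using assms by simp
qed

lemma horadam_cyclic_defect:
  fixes p q a b :: real
  defines "H \<equiv> horadam p q a b"
  assumes "n \<ge> 2"
  shows "H (Suc (Suc s) mod n + 1) - p * H (Suc s mod n + 1) - q * H (s mod n + 1) =
    (if Suc (Suc s) mod n = 0 then H 1 - H (n + 1)
     else if Suc (Suc s) mod n = 1 then - (q * (H n - H 0)) else 0)"
proof -
  obtain r where r: "s mod n = r"
    by simp
  have rec: "H (Suc (Suc m)) = p * H (Suc m) + q * H m" for m
    by (simp add: H_def)
  have "r < n"
    using assms r by auto
  then consider "r + 2 < n" | "n = Suc (Suc r)" | "n = Suc r"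
    by linarith
  then show ?thesis
  proof cases
    case 1
    then have "Suc s mod n = Suc r" "Suc (Suc s) mod n = Suc (Suc r)"
      using r by (simp_all add: mod_Suc)
    then show ?thesis
      using 1 r rec[of "Suc r"] by simp
  next
    case 2
    then have "Suc s mod n = Suc r" "Suc (Suc s) mod n = 0"
      using r by (simp_all add: mod_Suc)
    then show ?thesis
      using 2 r rec[of "Suc r"] by simp
  next
    case 3
    then have "Suc s mod n = 0" "Suc (Suc s) mod n = 1"
      using assms r by (simp_all add: mod_Suc)
    then show ?thesis
      using 3 r rec[of 0] by (simp add: algebra_simps)
  qed
qed

lemma horadam_circulant_elim:
  fixes p q a b :: real and n :: nat
  defines "H \<equiv> horadam p q a b"
  defines "C \<equiv> gcirc n 1 (\<lambda>l. H (l + 1))"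
  assumes "n \<ge> 2"
  shows "C * recurrence_elim_mat n p q =
    bidiag_two_col_mat n (\<lambda>i. C $$ (i, 0)) (\<lambda>i. C $$ (i, 1))
      (H 1 - H (n + 1)) (- (q * (H n - H 0)))" (is "_ = ?B")
proof (rule eq_matI)
  fix i j
  assume "i < dim_row ?B" and "j < dim_col ?B"
  then have ij: "i < n" "j < n"
    by (simp_all add: bidiag_two_col_mat_def)
  have C: "C \<in> carrier_mat n n"
    by (simp add: C_def gcirc_def)
  show "(C * recurrence_elim_mat n p q) $$ (i, j) = ?B $$ (i, j)"
  proof (cases "j < 2")
    case True
    then have "(C * recurrence_elim_mat n p q) $$ (i, j) = C $$ (i, j)"
      by (simp add: mult_recurrence_elim_mat_index[OF C ij])
    moreover have "j = 0 \<or> j = 1"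
      using True by linarith
    ultimately show ?thesis
      using ij by (auto simp: bidiag_two_col_mat_def)
  next
    case False
    define s where "s = j - 2 + n - i"
    have s: "j + n - i = Suc (Suc s)" "j - 1 + n - i = Suc s"
      using False ij by (simp_all add: s_def)
    have "(C * recurrence_elim_mat n p q) $$ (i, j) =
        H (Suc (Suc s) mod n + 1) - p * H (Suc s mod n + 1) - q * H (s mod n + 1)"
    proof -
      have C_index: "C $$ (i, l) = H ((l + n - i) mod n + 1)" if "l < n" for l
        using gcirc_one_index[OF ij(1) that, of "\<lambda>l. H (l + 1)"] by (simp add: C_def)
      have "j - 2 < n" "j - 1 < n"
        using ij by simp_all
      then show ?thesis
        using False s unfolding mult_recurrence_elim_mat_index[OF C ij]
        by (simp add: C_index ij s_def)
    qed
    also have "\<dots> = (if i = j then H 1 - H (n + 1)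
        else if i + 1 = j then - (q * (H n - H 0)) else 0)"
    proof -
      have "Suc (Suc s) mod n = 0 \<longleftrightarrow> i = j" "Suc (Suc s) mod n = 1 \<longleftrightarrow> i + 1 = j"
        using cyclic_diff_mod[OF ij] ij False unfolding s(1)[symmetric] by auto
      then show ?thesis
        using horadam_cyclic_defect[OF assms(3), of p q a b s] unfolding H_def by simp
    qed
    finally show ?thesis
      using False ij by (simp add: bidiag_two_col_mat_def)
  qed
qed (simp_all add: C_def gcirc_def bidiag_two_col_mat_def recurrence_elim_mat_def)

lemma det_horadam_circulant:
  fixes p q a b :: real and n :: nat
  defines "H \<equiv> horadam p q a b"
  defines "M \<equiv> q * (H n - H 0)"
  defines "N \<equiv> H 1 - H (n + 1)"
  assumes "n \<ge> 2"
  shows "det (gcirc n 1 (\<lambda>l. H (l + 1))) = H 1 * N ^ (n - 1) +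
    (\<Sum>i = 1..n - 1. (H 1 * H (i + 2) - H 2 * H (i + 1)) * M ^ (n - 1 - i) * N ^ (i - 1))"
proof -
  obtain m where n: "n = Suc (Suc m)"
    using assms by (metis add_2_eq_Suc le_Suc_ex)
  define C where "C = gcirc n 1 (\<lambda>l. H (l + 1))"
  have C: "C \<in> carrier_mat n n"
    by (simp add: C_def gcirc_def)
  have C_index: "C $$ (i, j) = H ((j + n - i) mod n + 1)" if "i < n" "j < n" for i j
    using gcirc_one_index[OF that, of "\<lambda>l. H (l + 1)"] by (simp add: C_def)
  have minor_entries: "C $$ (0, 0) * C $$ (Suc s, 1) - C $$ (0, 1) * C $$ (Suc s, 0) =
      H 1 * H (n - s + 1) - H 2 * H (n - s) + (if s = 0 then H 1 * N else 0)" if "s \<le> m" for s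
    using that by (cases s) (auto simp: C_index n N_def mod_Suc numeral_2_eq_2 Suc_diff_le algebra_simps)
  have "det C = det (C * recurrence_elim_mat n p q)"
    by (simp add: det_mult[OF C recurrence_elim_mat_carrier] det_recurrence_elim_mat)
  also have "C * recurrence_elim_mat n p q =
      bidiag_two_col_mat n (\<lambda>i. C $$ (i, 0)) (\<lambda>i. C $$ (i, 1)) N (- M)"
    using horadam_circulant_elim[OF assms(4), of p q a b] by (simp add: C_def H_def M_def N_def)
  also have "det \<dots> = (\<Sum>s\<le>m. (C $$ (0, 0) * C $$ (Suc s, 1) - C $$ (0, 1) * C $$ (Suc s, 0))
      * M ^ s * N ^ (m - s))"
    by (simp add: n det_bidiag_two_col_mat)
  also have "\<dots> = (\<Sum>s\<le>m. (H 1 * H (n - s + 1) - H 2 * H (n - s)) * M ^ s * N ^ (m - s)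
      + (if s = 0 then H 1 * N ^ (n - 1) else 0))"
  proof (rule sum.cong)
    fix s
    assume "s \<in> {..m}"
    then have "s \<le> m"
      by simp
    then show "(C $$ (0, 0) * C $$ (Suc s, 1) - C $$ (0, 1) * C $$ (Suc s, 0)) * M ^ s * N ^ (m - s) =
        (H 1 * H (n - s + 1) - H 2 * H (n - s)) * M ^ s * N ^ (m - s)
        + (if s = 0 then H 1 * N ^ (n - 1) else 0)"
      unfolding minor_entries[OF \<open>s \<le> m\<close>] by (simp add: n algebra_simps)
  qed simp
  also have "\<dots> = (\<Sum>s\<le>m. (H 1 * H (n - s + 1) - H 2 * H (n - s)) * M ^ s * N ^ (m - s))
      + H 1 * N ^ (n - 1)"
    by (simp add: sum.distrib)
  also have "(\<Sum>s\<le>m. (H 1 * H (n - s + 1) - H 2 * H (n - s)) * M ^ s * N ^ (m - s)) =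
      (\<Sum>i = 1..n - 1. (H 1 * H (i + 2) - H 2 * H (i + 1)) * M ^ (n - 1 - i) * N ^ (i - 1))"
    by (rule sum.reindex_bij_witness[of _ "\<lambda>i. n - 1 - i" "\<lambda>s. n - 1 - s"])
      (auto simp: n Suc_diff_le)
  finally show ?thesis
    by (simp add: C_def)
qed

lemma det_horadam_circulant_ratio_form:
  fixes p q a b :: real and n :: nat
  defines "H \<equiv> horadam p q a b"
  defines "M \<equiv> q * (H n - H 0)"
  defines "N \<equiv> H 1 - H (n + 1)"
  assumes "n \<ge> 2" and "H 1 \<noteq> 0" and "M \<noteq> 0"
  shows "det (gcirc n 1 (\<lambda>l. H (l + 1))) = H 1 * N ^ (n - 1) + H 1 * M ^ (n - 2) *
    (\<Sum>i = 1..n - 1. (- (H 2 * H (i + 1)) / H 1 + H (i + 2)) * (N / M) ^ (i - 1))"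
proof -
  have rescale: "(H 1 * H (i + 2) - H 2 * H (i + 1)) * M ^ (n - 1 - i) * N ^ (i - 1) =
      H 1 * M ^ (n - 2) * ((- (H 2 * H (i + 1)) / H 1 + H (i + 2)) * (N / M) ^ (i - 1))"
    if "i \<in> {1..n - 1}" for i
  proof -
    have "n - 2 = (n - 1 - i) + (i - 1)"
      using that by auto
    then have powers: "M ^ (n - 1 - i) * N ^ (i - 1) = M ^ (n - 2) * (N / M) ^ (i - 1)"
      using \<open>M \<noteq> 0\<close> by (simp add: power_add power_divide)
    have coeff: "H 1 * H (i + 2) - H 2 * H (i + 1) = H 1 * (- (H 2 * H (i + 1)) / H 1 + H (i + 2))"
      using \<open>H 1 \<noteq> 0\<close> by (simp add: field_simps)
    show ?thesis
      unfolding mult.assoc powers coeff by (simp only: ac_simps)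
  qed
  show ?thesis
    unfolding det_horadam_circulant[OF \<open>n \<ge> 2\<close>, of p q a b, folded H_def M_def N_def]
      sum_distrib_left
    by (simp only: sum.cong[OF refl rescale])
qed

theorem theorem2:
  fixes n g :: nat and k a b :: real and f gp :: "real poly"
  defines "H \<equiv> horadam (poly f k) (poly gp k) a b"
  defines "M \<equiv> poly gp k * (H n - H 0)"
  defines "N \<equiv> H 1 - H (n + 1)"
  assumes "n \<ge> 2" and "coprime n g" and "k > 0"
    and "(poly f k)\<^sup>2 + 4 * poly gp k > 0"
    and "H 1 \<noteq> 0" and "M \<noteq> 0"
  shows "det (gcirc n g (\<lambda>l. H (l + 1))) =
    det (Qg n g :: real mat) *
      (H 1 * N ^ (n - 1) + H 1 * M ^ (n - 2) *
        (\<Sum>i = 1..n - 1. (- (H 2 * H (i + 1)) / H 1 + H (i + 2)) * (N / M) ^ (i - 1)))"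
proof -
  have circ_carrier: "gcirc n 1 (\<lambda>l. H (l + 1)) \<in> carrier_mat n n"
    by (simp add: gcirc_def)
  have Qg_carrier: "(Qg n g :: real mat) \<in> carrier_mat n n"
    by (simp add: Qg_def gcirc_def)
  have "gcirc n g (\<lambda>l. H (l + 1)) = Qg n g * gcirc n 1 (\<lambda>l. H (l + 1))"
    by (rule gcirc_eq_Qg_mult_gcirc_one) (use \<open>n \<ge> 2\<close> in simp)
  then have "det (gcirc n g (\<lambda>l. H (l + 1))) =
      det (Qg n g :: real mat) * det (gcirc n 1 (\<lambda>l. H (l + 1)))"
    by (simp only: det_mult[OF Qg_carrier circ_carrier])
  also have "det (gcirc n 1 (\<lambda>l. H (l + 1))) = H 1 * N ^ (n - 1) + H 1 * M ^ (n - 2) *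
      (\<Sum>i = 1..n - 1. (- (H 2 * H (i + 1)) / H 1 + H (i + 2)) * (N / M) ^ (i - 1))"
    using det_horadam_circulant_ratio_form[of n "poly f k" "poly gp k" a b] assms
    by (simp add: H_def M_def N_def)
  finally show ?thesis .
qed

end
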